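(* Let $d$ be a positive integer, let $S\in L^2(\mathbb{H})$ be the function constructed below, let $S_j(\omega)=2^{4j}S(2^j\cdot\omega)$ and $V_j=\{f\ast S_j: f\in L^2(\mathbb{H})\}$ for $j\in\mathbb{Z}$. Suppose $\Gamma$ is a lattice in $\mathbb{H}$ and $\phi\in V_0$ is such that $\{L_\gamma\phi\}_{\gamma\in\Gamma}$ is a normalized tight frame of $V_0$. Then for every $j\in\mathbb{Z}$, the family $\{\phi_{j,\gamma}\}_{\gamma\in\Gamma}$, where $\phi_{j,\gamma}(\omega)=2^{2j}\phi\big(\gamma^{-1}(2^j\cdot\omega)\big)$, is a normalized tight frame of $V_j$.
   Context: The Heisenberg group $\mathbb{H}$ is $\mathbb{R}^3$ with product $(p_1,q_1,t_1)(p_2,q_2,t_2)=(p_1+p_2,q_1+q_2,t_1+t_2+\frac12(p_1q_2-q_1p_2))$ and Lebesgue (Haar) measure; for $a>0$, $a\cdot(p,q,t)=(ap,aq,a^2t)$ is an automorphism. Convolution: $f\ast g(\omega)=\int_{\mathbb{H}}f(\nu)g(\nu^{-1}\omega)\,d\nu$. Left translation: $L_\omega f(v)=f(\omega^{-1}v)$. A lattice is a discrete subgroup with compact quotient. A family $\{g_n\}$ in a Hilbert space $\mathcal{H}$ is a normalized tight frame of $\mathcal{H}$ if $\sum_n|\langle f,g_n\rangle|^2=\|f\|^2$ for all $f\in\mathcal{H}$. For $\lambda\neq0$, $\rho_\lambda(p,q,t)\phi(x)=e^{i\lambda t}e^{i\lambda(px+\frac12pq)}\phi(x+q)$ on $L^2(\mathbb{R})$;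 the Fourier transform $\hat f(\lambda)=\int_{\mathbb{H}}f(\omega)\rho_\lambda(\omega)d\omega$ extends by Plancherel to a unitary map from $L^2(\mathbb{H})$ onto the square-integrable measurable fields of Hilbert–Schmidt operators on $L^2(\mathbb{R})$ over $\mathbb{R}\setminus\{0\}$ with respect to $d\mu(\lambda)=(2\pi)^{-2}|\lambda|d\lambda$. Construction of $S$: fix an orthonormal basis $\{e_i\}_{i\in\mathbb{N}_0}$ of $L^2(\mathbb{R})$, put $e_i^\lambda(x)=|\lambda|^{1/4}e_i(|\lambda|^{1/2}x)$, and for $k\in\mathbb{N}_0$ let $I^k=\left[-\frac{\pi}{2^{2k+1}d},-\frac{\pi}{2^{2k+3}d}\right)\cup\left(\frac{\pi}{2^{2k+3}d},\frac{\pi}{2^{2k+1}d}\right]$. With $u\otimes u$ the operator $g\mapsto\langle g,u\rangle u$, $S$ is the unique element of $L^2(\mathbb{H})$ with $\hat S(\lambda)=\sum_{i=0}^{2^{2k}}e_i^{\lambda/2\pi}\otimes e_i^{\lambda/2\pi}$ if $\lambda\in I^k$ for some $k$, and $\hat S(\lambda)=0$ otherwise. *)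

theory Defs
  imports "HOL-Analysis.Analysis"
begin

type_synonym hpt = "real \<times> real \<times> real"

definition hmult :: "hpt \<Rightarrow> hpt \<Rightarrow> hpt" where
  "hmult x y = (case x of (p1, q1, t1) \<Rightarrow> case y of (p2, q2, t2) \<Rightarrow>
      (p1 + p2, q1 + q2, t1 + t2 + (p1 * q2 - q1 * p2) / 2))"

definition hinv :: "hpt \<Rightarrow> hpt" where
  "hinv x = (case x of (p, q, t) \<Rightarrow> (-p, -q, -t))"

definition hdil :: "real \<Rightarrow> hpt \<Rightarrow> hpt" where
  "hdil a x = (case x of (p, q, t) \<Rightarrow> (a * p, a * q, a^2 * t))"

section \<open>L^1 / L^2 notions (Lebesgue = Haar measure)\<close>

definition L2 :: "'a::euclidean_space measure \<Rightarrow> ('a \<Rightarrow> complex) \<Rightarrow> bool" where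
  "L2 M f \<longleftrightarrow> f \<in> borel_measurable M \<and> integrable M (\<lambda>x. (cmod (f x))^2)"

definition l2inner :: "'a measure \<Rightarrow> ('a \<Rightarrow> complex) \<Rightarrow> ('a \<Rightarrow> complex) \<Rightarrow> complex" where
  "l2inner M f g = (LINT x|M. f x * cnj (g x))"

definition l2norm2 :: "'a measure \<Rightarrow> ('a \<Rightarrow> complex) \<Rightarrow> real" where
  "l2norm2 M f = (LINT x|M. (cmod (f x))^2)"

definition hconv :: "(hpt \<Rightarrow> complex) \<Rightarrow> (hpt \<Rightarrow> complex) \<Rightarrow> hpt \<Rightarrow> complex" where
  "hconv f g w = (LINT v|lborel. f v * g (hmult (hinv v) w))"

definition hleft :: "hpt \<Rightarrow> (hpt \<Rightarrow> complex) \<Rightarrow> hpt \<Rightarrow> complex" where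
  "hleft w f = (\<lambda>v. f (hmult (hinv w) v))"

definition tight_frame :: "(hpt \<Rightarrow> complex) set \<Rightarrow> ('i \<Rightarrow> hpt \<Rightarrow> complex) \<Rightarrow> 'i set \<Rightarrow> bool" where
  "tight_frame V g I \<longleftrightarrow> (\<forall>i\<in>I. g i \<in> V) \<and>
     (\<forall>h\<in>V. ((\<lambda>i. (cmod (l2inner lborel h (g i)))^2) has_sum l2norm2 lborel h) I)"

definition hcosets :: "hpt set \<Rightarrow> hpt set set" where
  "hcosets \<Gamma> = range (\<lambda>w. (\<lambda>\<gamma>. hmult \<gamma> w) ` \<Gamma>)"

definition hquot_top :: "hpt set \<Rightarrow> hpt set topology" where
  "hquot_top \<Gamma> = topology (\<lambda>U. U \<subseteq> hcosets \<Gamma> \<and> open (\<Union>U))"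

definition hlattice :: "hpt set \<Rightarrow> bool" where
  "hlattice \<Gamma> \<longleftrightarrow>
     (0, 0, 0) \<in> \<Gamma> \<and> (\<forall>x\<in>\<Gamma>. \<forall>y\<in>\<Gamma>. hmult x y \<in> \<Gamma>) \<and> (\<forall>x\<in>\<Gamma>. hinv x \<in> \<Gamma>) \<and>
     (\<forall>x\<in>\<Gamma>. \<exists>e>0. \<forall>y\<in>\<Gamma>. dist x y < e \<longrightarrow> y = x) \<and>
     compact_space (hquot_top \<Gamma>)"

definition ONB_L2R :: "(nat \<Rightarrow> real \<Rightarrow> complex) \<Rightarrow> bool" where
  "ONB_L2R e \<longleftrightarrow> (\<forall>i. L2 lborel (e i)) \<and>
     (\<forall>i j. l2inner lborel (e i) (e j) = (if i = j then 1 else 0)) \<and>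
     (\<forall>g. L2 lborel g \<and> (\<forall>i. l2inner lborel g (e i) = 0) \<longrightarrow> (AE x in lborel. g x = 0))"

definition ebas :: "(nat \<Rightarrow> real \<Rightarrow> complex) \<Rightarrow> real \<Rightarrow> nat \<Rightarrow> real \<Rightarrow> complex" where
  "ebas e lam i x = complex_of_real (\<bar>lam\<bar> powr (1/4)) * e i (sqrt \<bar>lam\<bar> * x)"

definition rho :: "real \<Rightarrow> hpt \<Rightarrow> (real \<Rightarrow> complex) \<Rightarrow> real \<Rightarrow> complex" where
  "rho lam w u x = (case w of (p, q, t) \<Rightarrow>
     cis (lam * t) * cis (lam * (p * x + p * q / 2)) * u (x + q))"

definition hfourier_coeff :: "(hpt \<Rightarrow> complex) \<Rightarrow> real \<Rightarrow> (real \<Rightarrow> complex) \<Rightarrow> (real \<Rightarrow> complex) \<Rightarrow> complex" where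
  "hfourier_coeff f lam u v = (LINT w|lborel. f w * l2inner lborel (rho lam w u) v)"

definition Iset :: "nat \<Rightarrow> nat \<Rightarrow> real set" where
  "Iset d k = {lam. - pi / (2^(2*k+1) * real d) \<le> lam \<and> lam < - pi / (2^(2*k+3) * real d)}
            \<union> {lam. pi / (2^(2*k+3) * real d) < lam \<and> lam \<le> pi / (2^(2*k+1) * real d)}"

text \<open>Matrix entries <S^(lam) b_i, b_m> in the basis b = e^(lam/2pi).\<close>
definition S_coeff :: "nat \<Rightarrow> real \<Rightarrow> nat \<Rightarrow> nat \<Rightarrow> complex" where
  "S_coeff d lam i m = (if i = m \<and> (\<exists>k. lam \<in> Iset d k \<and> i \<le> 2^(2*k)) then 1 else 0)"

definition hs_dist2 :: "(nat \<Rightarrow> real \<Rightarrow> complex) \<Rightarrow> nat \<Rightarrow> (hpt \<Rightarrow> complex) \<Rightarrow> real \<Rightarrow> ennreal" where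
  "hs_dist2 e d f lam = (\<Sum>\<^sub>\<infinity>(i, m)\<in>UNIV.
      ennreal ((cmod (hfourier_coeff f lam (ebas e (lam / (2*pi)) i) (ebas e (lam / (2*pi)) m)
                      - S_coeff d lam i m))^2))"

text \<open>S in L^2(H) has Plancherel transform S^: it is the L^2-limit of functions f_n in
  L^1 cap L^2 whose Fourier transforms converge to S^ in L^2(mu), mu = (2pi)^-2 |lam| dlam
  (this is exactly the extension of the Fourier transform by continuity).\<close>
definition is_S :: "(nat \<Rightarrow> real \<Rightarrow> complex) \<Rightarrow> nat \<Rightarrow> (hpt \<Rightarrow> complex) \<Rightarrow> bool" where
  "is_S e d S \<longleftrightarrow> L2 lborel S \<and>
     (\<exists>fs. (\<forall>n. integrable lborel (fs n) \<and> L2 lborel (fs n)) \<and>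
        (\<lambda>n. \<integral>\<^sup>+ x. ennreal ((cmod (fs n x - S x))^2) \<partial>lborel) \<longlonglongrightarrow> 0 \<and>
        (\<lambda>n. \<integral>\<^sup>+ lam. indicator (- {0}) lam * ennreal (\<bar>lam\<bar> / (4 * pi^2)) * hs_dist2 e d (fs n) lam
              \<partial>lborel) \<longlonglongrightarrow> 0)"

definition Sj :: "(hpt \<Rightarrow> complex) \<Rightarrow> int \<Rightarrow> hpt \<Rightarrow> complex" where
  "Sj S j w = complex_of_real ((2 powr real_of_int j)^4) * S (hdil (2 powr real_of_int j) w)"

definition Vsp :: "(hpt \<Rightarrow> complex) \<Rightarrow> int \<Rightarrow> (hpt \<Rightarrow> complex) set" where
  "Vsp S j = {g. L2 lborel g \<and> (\<exists>f. L2 lborel f \<and> (AE x in lborel. g x = hconv f (Sj S j) x))}"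

definition phij :: "(hpt \<Rightarrow> complex) \<Rightarrow> int \<Rightarrow> hpt \<Rightarrow> hpt \<Rightarrow> complex" where
  "phij \<phi> j \<gamma> w = complex_of_real ((2 powr real_of_int j)^2) * \<phi> (hmult (hinv \<gamma>) (hdil (2 powr real_of_int j) w))"

end

theory Submission
  imports Defs
begin

text \<open>The dilation \<open>\<omega> \<mapsto> 2\<^sup>j \<cdot> \<omega>\<close> is an automorphism of \<open>\<H>\<close> scaling Haar measure by \<open>2\<^sup>4\<^sup>j\<close>,
  so \<open>h \<mapsto> 2\<^sup>2\<^sup>j h(2\<^sup>j \<cdot> _)\<close> is a unitary operator on \<open>L\<^sup>2(\<H>)\<close>. It turns convolution with \<open>S\<^sub>0\<close>
  into convolution with \<open>S\<^sub>j\<close>, hence maps \<open>V\<^sub>0\<close> onto \<open>V\<^sub>j\<close>, and it maps \<open>L\<^sub>\<gamma>\<phi>\<close> to \<open>\<phi>\<^sub>j\<^sub>,\<^sub>\<gamma>\<close>.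
  Unitary maps carry normalized tight frames of a subspace to normalized tight frames of its image.\<close>

lemma hdil_hdil: "hdil a (hdil b w) = hdil (b * a) w"
  by (auto simp: hdil_def split: prod.splits simp: algebra_simps power2_eq_square)

lemma hdil_1 [simp]: "hdil 1 w = w"
  by (auto simp: hdil_def split: prod.splits)

lemma hdil_hmult_hinv: "hdil a (hmult (hinv v) w) = hmult (hinv (hdil a v)) (hdil a w)"
  by (cases v, cases w)
    (simp add: hdil_def hmult_def hinv_def algebra_simps power2_eq_square add_divide_distrib diff_divide_distrib)

lemma measurable_hdil [measurable]: "hdil a \<in> borel_measurable borel"
proof -
  have "hdil a = (\<lambda>x. (a * fst x, a * fst (snd x), a\<^sup>2 * snd (snd x)))"
    by (auto simp: hdil_def split: prod.splits)
  then show ?thesis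
    by (auto intro!: borel_measurable_continuous_onI continuous_intros)
qed

lemma measurable_hmult_hinv [measurable]: "(\<lambda>v. hmult (hinv v) w) \<in> borel_measurable borel"
proof -
  have "(\<lambda>v. hmult (hinv v) w) = (\<lambda>v. (fst w - fst v, fst (snd w) - fst (snd v),
      snd (snd w) - snd (snd v) + (fst (snd v) * fst w - fst v * fst (snd w)) / 2))"
    by (auto simp: hmult_def hinv_def split: prod.splits)
  then show ?thesis
    by (auto intro!: borel_measurable_continuous_onI continuous_intros)
qed

text \<open>In the coordinates of \<open>\<real>\<^sup>3\<close>, \<open>hdil b\<close> is the diagonal map \<open>diag(b, b, b\<^sup>2)\<close>.\<close>
lemma lborel_eq_density_distr_hdil:
  assumes b: "b > 0"
  shows "lborel = density (distr lborel borel (hdil b)) (\<lambda>_. b ^ 4)"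
proof -
  define c :: "hpt \<Rightarrow> real" where "c k = (if k = (0, 0, 1) then b\<^sup>2 else b)" for k
  have "lborel = density (distr lborel borel (\<lambda>x::hpt. 0 + (\<Sum>k\<in>Basis. (c k * (x \<bullet> k)) *\<^sub>R k)))
      (\<lambda>_. \<Prod>k\<in>Basis. \<bar>c k\<bar>)"
    by (rule lborel_affine_euclidean) (use b in \<open>auto simp: c_def\<close>)
  also have "(\<lambda>x::hpt. 0 + (\<Sum>k\<in>Basis. (c k * (x \<bullet> k)) *\<^sub>R k)) = hdil b"
  proof
    fix x :: hpt
    show "0 + (\<Sum>k\<in>Basis. (c k * (x \<bullet> k)) *\<^sub>R k) = hdil b x"
      unfolding c_def
      by (cases x) (simp add: hdil_def Basis_prod_def sum.union_disjoint sum.reindex inner_prod_def)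
  qed
  also have "(\<Prod>k\<in>(Basis::hpt set). \<bar>c k\<bar>) = b ^ 4"
    unfolding c_def using b
    by (simp add: Basis_prod_def prod.union_disjoint prod.reindex inj_on_def)
      (simp add: power_def abs_of_pos abs_mult)
  finally show ?thesis .
qed

lemma integral_lborel_hdil:
  fixes f :: "hpt \<Rightarrow> 'c::{banach, second_countable_topology}"
  assumes "b > 0" and [measurable]: "f \<in> borel_measurable borel"
  shows "integral\<^sup>L lborel f = b ^ 4 *\<^sub>R integral\<^sup>L lborel (\<lambda>x. f (hdil b x))"
proof -
  have "integral\<^sup>L lborel f = integral\<^sup>L (distr lborel borel (hdil b)) (\<lambda>x. b ^ 4 *\<^sub>R f x)"
    using assms by (subst lborel_eq_density_distr_hdil[OF \<open>b > 0\<close>]) (simp add: integral_density)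
  also have "\<dots> = integral\<^sup>L lborel (\<lambda>x. b ^ 4 *\<^sub>R f (hdil b x))"
    by (rule integral_distr) auto
  finally show ?thesis by simp
qed

lemma integrable_lborel_hdil_iff:
  fixes f :: "hpt \<Rightarrow> 'c::{banach, second_countable_topology}"
  assumes b: "b > 0" and [measurable]: "f \<in> borel_measurable borel"
  shows "integrable lborel f \<longleftrightarrow> integrable lborel (\<lambda>x. f (hdil b x))"
proof -
  have "integrable lborel f \<longleftrightarrow> integrable (distr lborel borel (hdil b)) (\<lambda>x. b ^ 4 *\<^sub>R f x)"
    using b by (subst lborel_eq_density_distr_hdil[OF b]) (simp add: integrable_density)
  also have "\<dots> \<longleftrightarrow> integrable lborel (\<lambda>x. b ^ 4 *\<^sub>R f (hdil b x))"
    by (rule integrable_distr_eq) auto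
  also have "\<dots> \<longleftrightarrow> integrable lborel (\<lambda>x. f (hdil b x))"
  proof
    assume "integrable lborel (\<lambda>x. b ^ 4 *\<^sub>R f (hdil b x))"
    then have "integrable lborel (\<lambda>x. (1 / b ^ 4) *\<^sub>R (b ^ 4 *\<^sub>R f (hdil b x)))"
      by (rule integrable_scaleR_right)
    then show "integrable lborel (\<lambda>x. f (hdil b x))"
      using b by simp
  qed auto
  finally show ?thesis .
qed

lemma AE_lborel_hdil:
  assumes b: "b > 0" and "AE x in lborel. P x"
  shows "AE x in lborel. P (hdil b x)"
proof -
  have "AE x in distr lborel borel (hdil b). P x"
    using assms b by (subst (asm) lborel_eq_density_distr_hdil[OF b]) (simp add: AE_density)
  then obtain N where N: "N \<in> null_sets (distr lborel borel (hdil b))" "\<And>x. x \<notin> N \<Longrightarrow> P x"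
    by (auto elim!: AE_E3)
  then have "N \<in> sets borel"
    by (auto dest: null_setsD2)
  with N(1) have "hdil b -` N \<in> null_sets lborel"
    by (auto simp: null_sets_def emeasure_distr measurable_sets_borel[OF measurable_hdil])
  then show ?thesis
    by (rule AE_I') (use N(2) in blast)
qed

lemma borel_measurable_cnj [measurable]:
  "h \<in> borel_measurable M \<Longrightarrow> (\<lambda>x. cnj (h x)) \<in> borel_measurable M"
  by (rule borel_measurable_continuous_on[where f = cnj]) (auto intro!: continuous_intros)

definition hdilate :: "real \<Rightarrow> (hpt \<Rightarrow> complex) \<Rightarrow> hpt \<Rightarrow> complex" where
  "hdilate a h = (\<lambda>w. complex_of_real (a\<^sup>2) * h (hdil a w))"

lemma hdilate_hdilate: "hdilate a (hdilate b h) = hdilate (a * b) h"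
  by (auto simp: hdilate_def hdil_hdil power_mult_distrib mult.commute)

lemma hdilate_1 [simp]: "hdilate 1 h = h"
  by (simp add: hdilate_def)

lemma measurable_hdilate [measurable]:
  assumes [measurable]: "h \<in> borel_measurable borel"
  shows "hdilate a h \<in> borel_measurable borel"
  unfolding hdilate_def by measurable

lemma cmod_hdilate_squared:
  "a > 0 \<Longrightarrow> (cmod (hdilate a h w))\<^sup>2 = a ^ 4 * (cmod (h (hdil a w)))\<^sup>2"
  by (simp add: hdilate_def norm_mult norm_power power_mult_distrib abs_of_pos flip: power_mult)

lemma L2_hdilate:
  assumes a: "a > 0" and h: "L2 lborel h"
  shows "L2 lborel (hdilate a h)"
proof -
  have [measurable]: "h \<in> borel_measurable borel"
    using h by (simp add: L2_def)
  have "integrable lborel (\<lambda>x. (cmod (h (hdil a x)))\<^sup>2)"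
    using h integrable_lborel_hdil_iff[OF a, of "\<lambda>x. (cmod (h x))\<^sup>2"] by (simp add: L2_def)
  then show ?thesis
    by (simp add: L2_def cmod_hdilate_squared[OF a])
qed

lemma l2inner_hdilate:
  assumes a: "a > 0" and [measurable]: "g \<in> borel_measurable borel" "h \<in> borel_measurable borel"
  shows "l2inner lborel (hdilate a g) (hdilate a h) = l2inner lborel g h"
proof -
  have "l2inner lborel g h = a ^ 4 *\<^sub>R (LINT x|lborel. g (hdil a x) * cnj (h (hdil a x)))"
    unfolding l2inner_def by (rule integral_lborel_hdil[OF a]) measurable
  moreover have "l2inner lborel (hdilate a g) (hdilate a h) =
      (LINT x|lborel. complex_of_real (a ^ 4) * (g (hdil a x) * cnj (h (hdil a x))))"
    unfolding l2inner_def hdilate_def by (simp add: power_def mult_ac)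
  ultimately show ?thesis
    by (simp add: scaleR_conv_of_real)
qed

lemma l2norm2_hdilate:
  assumes a: "a > 0" and [measurable]: "h \<in> borel_measurable borel"
  shows "l2norm2 lborel (hdilate a h) = l2norm2 lborel h"
  unfolding l2norm2_def cmod_hdilate_squared[OF a]
  by (subst integral_lborel_hdil[OF a]) simp_all

lemma hconv_hdilate:
  assumes a: "a > 0" and [measurable]: "f \<in> borel_measurable borel" "K \<in> borel_measurable borel"
  shows "hconv (hdilate a f) (\<lambda>w. complex_of_real (a ^ 4) * K (hdil a w)) = hdilate a (hconv f K)"
proof
  fix w
  define F where "F u = f u * K (hmult (hinv u) (hdil a w))" for u
  have [measurable]: "F \<in> borel_measurable borel"
    unfolding F_def by measurable
  have "hconv f K (hdil a w) = a ^ 4 *\<^sub>R (LINT x|lborel. F (hdil a x))"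
    unfolding hconv_def F_def[symmetric] by (rule integral_lborel_hdil[OF a]) measurable
  moreover have "hconv (hdilate a f) (\<lambda>w. complex_of_real (a ^ 4) * K (hdil a w)) w =
      (LINT x|lborel. complex_of_real (a ^ 6) * F (hdil a x))"
    unfolding hconv_def hdilate_def F_def by (simp add: hdil_hmult_hinv power_def mult_ac)
  ultimately show "hconv (hdilate a f) (\<lambda>w. complex_of_real (a ^ 4) * K (hdil a w)) w =
      hdilate a (hconv f K) w"
    by (simp add: hdilate_def scaleR_conv_of_real power_def)
qed

lemma Sj_add: "Sj S (j + k) = (\<lambda>w. complex_of_real ((2 powr k) ^ 4) * Sj S j (hdil (2 powr k) w))"
  unfolding Sj_def hdil_hdil by (simp add: powr_add power_mult_distrib mult_ac)

lemma hdilate_Vsp: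
  assumes [measurable]: "S \<in> borel_measurable borel" and h: "h \<in> Vsp S j"
  shows "hdilate (2 powr k) h \<in> Vsp S (j + k)"
proof -
  define a :: real where "a = 2 powr k"
  have a: "a > 0"
    by (simp add: a_def)
  obtain f where f: "L2 lborel f" and conv: "AE x in lborel. h x = hconv f (Sj S j) x"
    using h by (auto simp: Vsp_def)
  have [measurable]: "f \<in> borel_measurable borel"
    using f by (simp add: L2_def)
  have [measurable]: "Sj S j \<in> borel_measurable borel"
    unfolding Sj_def by measurable
  have "hconv (hdilate a f) (Sj S (j + k)) = hdilate a (hconv f (Sj S j))"
    unfolding Sj_add a_def[symmetric] by (rule hconv_hdilate[OF a]) measurable
  moreover have "AE x in lborel. hdilate a h x = hdilate a (hconv f (Sj S j)) x"
    using AE_lborel_hdil[OF a conv] by eventually_elim (simp add: hdilate_def)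
  moreover have "L2 lborel (hdilate a h)"
    using h L2_hdilate[OF a] by (simp add: Vsp_def)
  ultimately show ?thesis
    unfolding a_def[symmetric] Vsp_def using L2_hdilate[OF a f] by auto
qed

lemma hdilate_Vsp_0_eq: "S \<in> borel_measurable borel \<Longrightarrow> hdilate (2 powr j) ` Vsp S 0 = Vsp S j"
proof (intro equalityI subsetI)
  fix g assume "S \<in> borel_measurable borel" "g \<in> Vsp S j"
  then have "hdilate (2 powr (- j)) g \<in> Vsp S 0"
    using hdilate_Vsp[of S g j "- j"] by simp
  moreover have "g = hdilate (2 powr j) (hdilate (2 powr (- j)) g)"
    by (simp add: hdilate_hdilate flip: powr_add)
  ultimately show "g \<in> hdilate (2 powr j) ` Vsp S 0"
    by blast
qed (use hdilate_Vsp[where j = 0] in auto)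

lemma tight_frame_unitary_image:
  assumes frame: "tight_frame V g I"
    and onto: "U ` V = W"
    and inner: "\<And>x y. x \<in> V \<Longrightarrow> y \<in> V \<Longrightarrow> l2inner lborel (U x) (U y) = l2inner lborel x y"
    and norm: "\<And>x. x \<in> V \<Longrightarrow> l2norm2 lborel (U x) = l2norm2 lborel x"
  shows "tight_frame W (\<lambda>i. U (g i)) I"
  unfolding tight_frame_def
proof (intro conjI ballI)
  show "U (g i) \<in> W" if "i \<in> I" for i
    using frame that onto by (auto simp: tight_frame_def)
next
  fix w assume "w \<in> W"
  then obtain v where v: "v \<in> V" and w: "w = U v"
    using onto by blast
  have "((\<lambda>i. (cmod (l2inner lborel v (g i)))\<^sup>2) has_sum l2norm2 lborel v) I"
    using frame v by (simp add: tight_frame_def)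
  moreover have "l2inner lborel (U v) (U (g i)) = l2inner lborel v (g i)" if "i \<in> I" for i
    using frame that v by (simp add: inner tight_frame_def)
  then have "((\<lambda>i. (cmod (l2inner lborel (U v) (U (g i))))\<^sup>2) has_sum l2norm2 lborel v) I
      \<longleftrightarrow> ((\<lambda>i. (cmod (l2inner lborel v (g i)))\<^sup>2) has_sum l2norm2 lborel v) I"
    by (intro has_sum_cong) simp
  ultimately show "((\<lambda>i. (cmod (l2inner lborel w (U (g i))))\<^sup>2) has_sum l2norm2 lborel w) I"
    unfolding w norm[OF v] by blast
qed

theorem mainTheorem4:
  fixes d :: nat and e :: "nat \<Rightarrow> real \<Rightarrow> complex" and S \<phi> :: "hpt \<Rightarrow> complex"
    and \<Gamma> :: "hpt set" and j :: int
  assumes "d > 0"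
    and "ONB_L2R e"
    and "is_S e d S"
    and "hlattice \<Gamma>"
    and "\<phi> \<in> Vsp S 0"
    and "tight_frame (Vsp S 0) (\<lambda>\<gamma>. hleft \<gamma> \<phi>) \<Gamma>"
  shows "tight_frame (Vsp S j) (phij \<phi> j) \<Gamma>"
proof -
  have "S \<in> borel_measurable borel"
    using \<open>is_S e d S\<close> by (simp add: is_S_def L2_def)
  then have onto: "hdilate (2 powr j) ` Vsp S 0 = Vsp S j"
    by (rule hdilate_Vsp_0_eq)
  have measurable_Vsp: "v \<in> borel_measurable borel" if "v \<in> Vsp S 0" for v
    using that by (simp add: Vsp_def L2_def)
  have "phij \<phi> j = (\<lambda>\<gamma>. hdilate (2 powr j) (hleft \<gamma> \<phi>))"
    by (intro ext) (simp add: phij_def hdilate_def hleft_def)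
  moreover have "tight_frame (Vsp S j) (\<lambda>\<gamma>. hdilate (2 powr j) (hleft \<gamma> \<phi>)) \<Gamma>"
    using \<open>tight_frame (Vsp S 0) (\<lambda>\<gamma>. hleft \<gamma> \<phi>) \<Gamma>\<close> onto
    by (rule tight_frame_unitary_image) (simp_all add: measurable_Vsp l2inner_hdilate l2norm2_hdilate)
  ultimately show ?thesis
    by simp
qed

end
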